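(* Let $n,m$ be positive integers with $2m<n$, $d=2^n$, $\tilde d=2^{n-2m}$, and $0<h\le1$. If $\delta:=h^2-2^{-2m}>0$, then $$\frac{\operatorname{Area}\big(\mathrm{CAP}^{(2\tilde d)}(h)\big)}{S_{2d-1}}\le\exp\big(-2(d+1)\delta^2\big).$$
   Context: For $1\le q\le p-1$, $\mathrm{CAP}^{(q)}(h)=\{x\in S^{p-1}\subset\mathbb{R}^p: h^2\le\sum_{j=1}^q x_j^2\le1\}$, here with $p=2d$. $\operatorname{Area}$ is the surface measure on $S^{2d-1}$ and $S_{2d-1}=2\pi^d/\Gamma(d)$ is the total area of $S^{2d-1}$. *)

theory Defs
  imports "HOL-Analysis.Analysis"
begin

text \<open>Points of R^p are represented as extensional functions on the index set {..<p}
  (coordinates 0..p-1), with Lebesgue measure given by the product measure.\<close>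

definition vnorm :: "nat \<Rightarrow> (nat \<Rightarrow> real) \<Rightarrow> real" where
  "vnorm p x = sqrt (\<Sum>i<p. (x i)\<^sup>2)"

definition unit_sphere :: "nat \<Rightarrow> (nat \<Rightarrow> real) set" where
  "unit_sphere p = {x \<in> {..<p} \<rightarrow>\<^sub>E UNIV. (\<Sum>i<p. (x i)\<^sup>2) = 1}"

definition CAP :: "nat \<Rightarrow> nat \<Rightarrow> real \<Rightarrow> (nat \<Rightarrow> real) set" where
  "CAP p q h = {x \<in> unit_sphere p. h\<^sup>2 \<le> (\<Sum>j<q. (x j)\<^sup>2) \<and> (\<Sum>j<q. (x j)\<^sup>2) \<le> 1}"

text \<open>Surface measure on S^(p-1), defined via the cone construction:
  Area(A) = p * Leb({r y : 0 < r <= 1, y in A}).\<close>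
definition cone :: "nat \<Rightarrow> (nat \<Rightarrow> real) set \<Rightarrow> (nat \<Rightarrow> real) set" where
  "cone p A = {x \<in> {..<p} \<rightarrow>\<^sub>E UNIV. 0 < vnorm p x \<and> vnorm p x \<le> 1 \<and>
                 restrict (\<lambda>i. x i / vnorm p x) {..<p} \<in> A}"

definition sphere_area :: "nat \<Rightarrow> (nat \<Rightarrow> real) set \<Rightarrow> real" where
  "sphere_area p A = real p * measure (Pi\<^sub>M {..<p} (\<lambda>_. lborel)) (cone p A)"

end

theory Submission
  imports Defs "HOL-Probability.Hoeffding"
begin

(* Split the 2d coordinates into the first 2a, with squared norm u, and the remaining
   2b = 2(d - a), with squared norm v.  Under Lebesgue measure the pair (u, v) has density
   proportional to u^(a-1) v^(b-1) on the positive quadrant, and the cone over CAP^(2a)(h)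
   is the region u + v <= 1, h^2 (u + v) <= u.  Integrating out v and then u expresses the
   normalised area of the cap through an incomplete beta integral, i.e. through the binomial
   tail P(Bin(d - 1, h^2) <= a - 1).  As a/d = 2^(-2m), this is a lower deviation of size
   delta = h^2 - a/d from the mean, and Hoeffding's inequality bounds it by
   exp(-2 (d + 1) delta^2). *)

section \<open>Radial integration in even dimension\<close>

lemma unit_ball_vol_even_dim: "unit_ball_vol (real (2 * k)) = pi ^ k / fact k"
proof -
  have "Gamma (real (2 * k) / 2 + 1) = fact k"
    using Gamma_fact[of k] by (simp add: add.commute)
  moreover have "pi powr (real (2 * k) / 2) = pi ^ k"
    by (simp add: powr_realpow)
  ultimately show ?thesis by (simp add: unit_ball_vol_def)
qed

lemma nn_integral_power_atLeastAtMost: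
  fixes c x :: real and k :: nat
  assumes "0 \<le> x" "0 < k" "0 \<le> c"
  shows "(\<integral>\<^sup>+t. ennreal (c * t ^ (k - 1)) * indicator {0..x} t \<partial>lborel) = ennreal (c * x ^ k / k)"
proof -
  have "((\<lambda>t. c * t ^ (k - 1)) has_integral (c * x ^ k / k - c * 0 ^ k / k)) {0..x}"
  proof (rule fundamental_theorem_of_calculus)
    fix t assume "t \<in> {0..x}"
    have "((\<lambda>t. c * t ^ k / k) has_real_derivative (c * t ^ (k - 1))) (at t within {0..x})"
      using assms by (auto intro!: derivative_eq_intros)
    then show "((\<lambda>t. c * t ^ k / k) has_vector_derivative (c * t ^ (k - 1))) (at t within {0..x})"
      by (simp add: has_real_derivative_iff_has_vector_derivative)
  qed (use assms in auto)
  then show ?thesis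
    using assms by (subst nn_integral_has_integral_lebesgue') (auto simp: zero_power)
qed

lemma measure_eqI_atMost:
  fixes M N :: "real measure"
  assumes "sets M = sets borel" "sets N = sets borel"
    and "\<And>x. emeasure M {..x} < \<infinity>"
    and "\<And>x. emeasure M {..x} = emeasure N {..x}"
  shows "M = N"
proof (rule measure_eqI_generator_eq_countable[where E = "range atMost" and \<Omega> = UNIV and A = "atMost ` \<rat>"])
  show "Int_stable (range atMost :: real set set)"
    by (auto simp: Int_stable_def)
  show "sets M = sigma_sets UNIV (range atMost)" "sets N = sigma_sets UNIV (range atMost)"
    unfolding assms(1,2) borel_eq_atMost by auto
  show "\<Union> (atMost ` \<rat>) = (UNIV :: real set)"
    by (auto intro: Rats_no_top_le)
qed (use assms(3,4) in \<open>auto intro: countable_rat simp: less_top\<close>)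

lemma emeasure_PiM_sum_squares_le:
  assumes "finite A" "card A = 2 * k" "0 < k" "0 \<le> x"
  shows "emeasure (Pi\<^sub>M A (\<lambda>_. lborel)) ({f. (\<Sum>i\<in>A. (f i)\<^sup>2) \<le> x} \<inter> space (Pi\<^sub>M A (\<lambda>_. lborel)))
           = ennreal (pi ^ k / fact k * x ^ k)"
    (is "?m x = _")
proof -
  have pos: "?m x = ennreal (pi ^ k / fact k * x ^ k)" if "0 < x" for x
  proof -
    have "{f. (\<Sum>i\<in>A. (f i)\<^sup>2) \<le> x} = {f. sqrt (\<Sum>i\<in>A. (f i)\<^sup>2) \<le> sqrt x}"
      by (auto simp: real_sqrt_le_iff)
    moreover have "sqrt x ^ (2 * k) = x ^ k"
      using that by (simp add: power_mult)
    ultimately show ?thesis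
      using emeasure_cball_aux[OF assms(1), of "sqrt x"] that assms(2) unit_ball_vol_even_dim[of k]
      by simp
  qed
  show ?thesis
  proof (cases "x = 0")
    case True
    \<comment> \<open>The ball of radius 0 is squeezed between balls of radius t \<longrightarrow> 0.\<close>
    have "?m 0 \<le> ennreal (pi ^ k / fact k * t ^ k)" if "0 < t" for t
      unfolding pos[OF that, symmetric] using that by (intro emeasure_mono) (auto, measurable)
    moreover have "((\<lambda>t. ennreal (pi ^ k / fact k * t ^ k)) \<longlongrightarrow> ennreal (pi ^ k / fact k * 0 ^ k)) (at_right 0)"
      by (intro tendsto_ennrealI tendsto_intros)
    ultimately have "?m 0 \<le> ennreal (pi ^ k / fact k * 0 ^ k)"
      by (intro tendsto_le[OF trivial_limit_at_right_real _ tendsto_const])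
         (auto intro: eventually_mono[OF eventually_at_right_less])
    then show ?thesis using True assms(3) by (simp add: zero_power)
  qed (use pos assms(4) in auto)
qed

lemma emeasure_density_power_atMost:
  fixes c x :: real and k :: nat
  assumes "0 < k" "0 \<le> c"
  shows "emeasure (density lborel (\<lambda>t. ennreal (c * t ^ (k - 1)) * indicator {0..} t)) {..x}
           = ennreal (c * max 0 x ^ k / k)"
proof -
  have "emeasure (density lborel (\<lambda>t. ennreal (c * t ^ (k - 1)) * indicator {0..} t)) {..x} =
      (\<integral>\<^sup>+t. ennreal (c * t ^ (k - 1)) * indicator {0..} t * indicator {..x} t \<partial>lborel)"
    by (rule emeasure_density) auto
  also have "\<dots> = ennreal (c * max 0 x ^ k / k)"
  proof (cases "x < 0")
    case True
    then have "(\<integral>\<^sup>+t. ennreal (c * t ^ (k - 1)) * indicator {0..} t * indicator {..x} t \<partial>lborel) =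
        (\<integral>\<^sup>+(t::real). 0 \<partial>lborel)"
      by (intro nn_integral_cong) (auto simp: indicator_def)
    then show ?thesis using True assms(1) by (simp add: zero_power)
  next
    case False
    then have "(\<integral>\<^sup>+t. ennreal (c * t ^ (k - 1)) * indicator {0..} t * indicator {..x} t \<partial>lborel) =
        (\<integral>\<^sup>+t. ennreal (c * t ^ (k - 1)) * indicator {0..x} t \<partial>lborel)"
      by (intro nn_integral_cong) (auto simp: indicator_def)
    then show ?thesis
      using False nn_integral_power_atLeastAtMost[OF _ assms, of x] by simp
  qed
  finally show ?thesis .
qed

lemma distr_PiM_lborel_sum_squares:
  assumes "finite A" "card A = 2 * k" "0 < k"
  shows "distr (Pi\<^sub>M A (\<lambda>_. lborel)) borel (\<lambda>f. \<Sum>i\<in>A. (f i)\<^sup>2) =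
         density lborel (\<lambda>t. ennreal (pi ^ k / fact (k - 1) * t ^ (k - 1)) * indicator {0..} t)"
    (is "?L = ?R")
proof (rule measure_eqI_atMost)
  have R: "emeasure ?R {..x} = ennreal (pi ^ k / fact k * max 0 x ^ k)" for x
    using emeasure_density_power_atMost[OF assms(3), of "pi ^ k / fact (k - 1)" x] assms(3)
    by (simp add: fact_reduce[of k])
  have L: "emeasure ?L {..x} = ennreal (pi ^ k / fact k * max 0 x ^ k)" for x
  proof (cases "x < 0")
    case True
    then have "{f. (\<Sum>i\<in>A. (f i)\<^sup>2) \<le> x} = {}"
      by (auto simp: not_le intro: less_le_trans[OF _ sum_nonneg])
    then show ?thesis
      using True assms(3) by (subst emeasure_distr) (auto simp: vimage_def zero_power)
  next
    case False
    then show ?thesis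
      using emeasure_PiM_sum_squares_le[OF assms, of x]
      by (subst emeasure_distr) (auto simp: vimage_def Int_commute)
  qed
  show "emeasure ?L {..x} < \<infinity>" "emeasure ?L {..x} = emeasure ?R {..x}" for x
    unfolding L R by simp_all
qed auto

lemma nn_integral_PiM_lborel_sum_squares:
  assumes "finite A" "card A = 2 * k" "0 < k" and [measurable]: "F \<in> borel_measurable borel"
  shows "(\<integral>\<^sup>+f. F (\<Sum>i\<in>A. (f i)\<^sup>2) \<partial>Pi\<^sub>M A (\<lambda>_. lborel)) =
         (\<integral>\<^sup>+t. ennreal (pi ^ k / fact (k - 1) * t ^ (k - 1)) * indicator {0..} t * F t \<partial>lborel)"
proof -
  have "(\<integral>\<^sup>+f. F (\<Sum>i\<in>A. (f i)\<^sup>2) \<partial>Pi\<^sub>M A (\<lambda>_. lborel)) =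
        (\<integral>\<^sup>+t. F t \<partial>distr (Pi\<^sub>M A (\<lambda>_. lborel)) borel (\<lambda>f. \<Sum>i\<in>A. (f i)\<^sup>2))"
    by (subst nn_integral_distr) auto
  also have "\<dots> = (\<integral>\<^sup>+t. ennreal (pi ^ k / fact (k - 1) * t ^ (k - 1)) * indicator {0..} t * F t \<partial>lborel)"
    unfolding distr_PiM_lborel_sum_squares[OF assms(1-3)]
    by (subst nn_integral_density) (auto simp: mult.assoc)
  finally show ?thesis .
qed

lemma nn_integral_PiM_lborel_two_sums_squares:
  fixes I J :: "'i set" and F :: "real \<Rightarrow> real \<Rightarrow> ennreal"
  assumes "finite I" "finite J" "I \<inter> J = {}" "card I = 2 * a" "card J = 2 * b" "0 < a" "0 < b"
    and [measurable]: "case_prod F \<in> borel_measurable borel"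
  shows "(\<integral>\<^sup>+x. F (\<Sum>i\<in>I. (x i)\<^sup>2) (\<Sum>j\<in>J. (x j)\<^sup>2) \<partial>Pi\<^sub>M (I \<union> J) (\<lambda>_. lborel)) =
    (\<integral>\<^sup>+u. ennreal (pi ^ a / fact (a - 1) * u ^ (a - 1)) * indicator {0..} u *
       (\<integral>\<^sup>+v. ennreal (pi ^ b / fact (b - 1) * v ^ (b - 1)) * indicator {0..} v * F u v \<partial>lborel)
     \<partial>lborel)"
    (is "_ = ?rhs")
proof -
  interpret product_sigma_finite "\<lambda>_::'i. lborel :: real measure" by standard
  have [measurable]: "case_prod F \<in> borel_measurable (borel \<Otimes>\<^sub>M borel)"
    by (simp add: borel_prod)
  have meas: "(\<lambda>x. F (\<Sum>i\<in>I. (x i)\<^sup>2) (\<Sum>j\<in>J. (x j)\<^sup>2)) \<in> borel_measurable (Pi\<^sub>M (I \<union> J) (\<lambda>_. lborel))"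
    by measurable
  have "(\<integral>\<^sup>+x. F (\<Sum>i\<in>I. (x i)\<^sup>2) (\<Sum>j\<in>J. (x j)\<^sup>2) \<partial>Pi\<^sub>M (I \<union> J) (\<lambda>_. lborel)) =
      (\<integral>\<^sup>+x. (\<integral>\<^sup>+y. F (\<Sum>i\<in>I. (merge I J (x, y) i)\<^sup>2) (\<Sum>j\<in>J. (merge I J (x, y) j)\<^sup>2)
        \<partial>Pi\<^sub>M J (\<lambda>_. lborel)) \<partial>Pi\<^sub>M I (\<lambda>_. lborel))"
    by (rule product_nn_integral_fold[OF assms(3,1,2) meas])
  also have "\<dots> = (\<integral>\<^sup>+x. (\<integral>\<^sup>+y. F (\<Sum>i\<in>I. (x i)\<^sup>2) (\<Sum>j\<in>J. (y j)\<^sup>2) \<partial>Pi\<^sub>M J (\<lambda>_. lborel))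
      \<partial>Pi\<^sub>M I (\<lambda>_. lborel))"
    using assms(3) by (auto intro!: nn_integral_cong sum.cong arg_cong2[where f = F] simp: merge_def)
  also have "\<dots> = (\<integral>\<^sup>+x. (\<integral>\<^sup>+v. ennreal (pi ^ b / fact (b - 1) * v ^ (b - 1)) * indicator {0..} v *
      F (\<Sum>i\<in>I. (x i)\<^sup>2) v \<partial>lborel) \<partial>Pi\<^sub>M I (\<lambda>_. lborel))"
    using assms by (simp add: nn_integral_PiM_lborel_sum_squares)
  also have "\<dots> = ?rhs"
    by (rule nn_integral_PiM_lborel_sum_squares[OF assms(1,4,6)]) measurable
  finally show ?thesis .
qed

section \<open>Volume of the cone over a cap\<close>

lemma cone_CAP_eq:
  assumes "q \<le> p"
  shows "cone p (CAP p q h) = {x \<in> {..<p} \<rightarrow>\<^sub>E UNIV. 0 < (\<Sum>i<p. (x i)\<^sup>2) \<and> (\<Sum>i<p. (x i)\<^sup>2) \<le> 1 \<and>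
           h\<^sup>2 * (\<Sum>i<p. (x i)\<^sup>2) \<le> (\<Sum>i<q. (x i)\<^sup>2)}"
    (is "_ = ?C")
proof (intro set_eqI)
  fix x :: "nat \<Rightarrow> real"
  let ?N = "\<Sum>i<p. (x i)\<^sup>2" and ?Q = "\<Sum>i<q. (x i)\<^sup>2"
  let ?y = "restrict (\<lambda>i. x i / vnorm p x) {..<p}"
  have vnorm: "vnorm p x = sqrt ?N" by (simp add: vnorm_def)
  have normalized: "(\<Sum>i<p. (?y i)\<^sup>2) = 1 \<and> (\<Sum>j<q. (?y j)\<^sup>2) = ?Q / ?N" if "0 < ?N"
  proof -
    have "(\<Sum>i<p. (?y i)\<^sup>2) = (\<Sum>i<p. (x i)\<^sup>2 / ?N)" "(\<Sum>j<q. (?y j)\<^sup>2) = (\<Sum>j<q. (x j)\<^sup>2 / ?N)"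
      using that assms by (auto intro!: sum.cong simp: vnorm power_divide)
    then show ?thesis
      using that by (simp add: sum_divide_distrib[symmetric])
  qed
  show "x \<in> cone p (CAP p q h) \<longleftrightarrow> x \<in> ?C"
  proof
    assume "x \<in> cone p (CAP p q h)"
    then have x: "x \<in> {..<p} \<rightarrow>\<^sub>E UNIV" "0 < vnorm p x" "vnorm p x \<le> 1" "?y \<in> CAP p q h"
      by (auto simp: cone_def)
    have "0 < ?N" using x(2) by (simp add: vnorm)
    moreover have "?N \<le> 1" using x(3) by (simp add: vnorm)
    moreover have "h\<^sup>2 * ?N \<le> ?Q"
      using x(4) normalized[OF \<open>0 < ?N\<close>] \<open>0 < ?N\<close> by (simp add: CAP_def pos_le_divide_eq)
    ultimately show "x \<in> ?C" using x(1) by blast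
  next
    assume "x \<in> ?C"
    then have x: "x \<in> {..<p} \<rightarrow>\<^sub>E UNIV" "0 < ?N" "?N \<le> 1" "h\<^sup>2 * ?N \<le> ?Q" by auto
    have "?Q \<le> ?N" using assms by (intro sum_mono2) auto
    then have "?y \<in> CAP p q h"
      using x normalized[OF x(2)] by (auto simp: CAP_def unit_sphere_def pos_le_divide_eq)
    then show "x \<in> cone p (CAP p q h)" using x by (auto simp: cone_def vnorm)
  qed
qed

lemma emeasure_cone_CAP_eq_nn_integral:
  fixes a b :: nat and h :: real
  assumes "0 < a" "0 < b"
  shows "emeasure (Pi\<^sub>M {..<2 * (a + b)} (\<lambda>_. lborel)) (cone (2 * (a + b)) (CAP (2 * (a + b)) (2 * a) h)) =
    (\<integral>\<^sup>+u. ennreal (pi ^ a / fact (a - 1) * u ^ (a - 1)) * indicator {0..} u *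
       (\<integral>\<^sup>+v. ennreal (pi ^ b / fact (b - 1) * v ^ (b - 1)) * indicator {0..} v *
          indicator {(u, v). 0 < u + v \<and> u + v \<le> 1 \<and> h\<^sup>2 * (u + v) \<le> u} (u, v) \<partial>lborel) \<partial>lborel)"
    (is "_ = ?rhs")
proof -
  define I J where "I = {..<2 * a}" and "J = {2 * a..<2 * (a + b)}"
  define S where "S = {(u, v). 0 < u + v \<and> u + v \<le> 1 \<and> h\<^sup>2 * (u + v) \<le> (u::real)}"
  have IJ: "{..<2 * (a + b)} = I \<union> J" "I \<inter> J = {}" by (auto simp: I_def J_def)
  have "{p \<in> space (borel \<Otimes>\<^sub>M borel). p \<in> S} \<in> sets (borel \<Otimes>\<^sub>M borel)"
    unfolding S_def by measurable
  then have S_borel[measurable]: "S \<in> sets borel"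
    unfolding borel_prod by simp
  have sum_split: "(\<Sum>i\<in>I \<union> J. (x i)\<^sup>2) = (\<Sum>i\<in>I. (x i)\<^sup>2) + (\<Sum>j\<in>J. (x j)\<^sup>2)" for x :: "nat \<Rightarrow> real"
    by (rule sum.union_disjoint) (auto simp: I_def J_def)
  let ?P = "Pi\<^sub>M (I \<union> J) (\<lambda>_. lborel :: real measure)"
  have cone_eq: "cone (2 * (a + b)) (CAP (2 * (a + b)) (2 * a) h) =
      {x \<in> space ?P. ((\<Sum>i\<in>I. (x i)\<^sup>2), (\<Sum>j\<in>J. (x j)\<^sup>2)) \<in> S}"
    unfolding cone_CAP_eq[of "2 * a" "2 * (a + b)", OF mult_le_mono2[OF le_add1]] IJ(1) sum_split
    by (simp add: space_PiM S_def I_def)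
  have "emeasure (Pi\<^sub>M {..<2 * (a + b)} (\<lambda>_. lborel)) (cone (2 * (a + b)) (CAP (2 * (a + b)) (2 * a) h)) =
      (\<integral>\<^sup>+x. indicator {x \<in> space ?P. ((\<Sum>i\<in>I. (x i)\<^sup>2), (\<Sum>j\<in>J. (x j)\<^sup>2)) \<in> S} x \<partial>?P)"
    unfolding cone_eq IJ(1) by (intro nn_integral_indicator[symmetric]) measurable
  also have "\<dots> = (\<integral>\<^sup>+x. indicator S ((\<Sum>i\<in>I. (x i)\<^sup>2), (\<Sum>j\<in>J. (x j)\<^sup>2)) \<partial>?P)"
    by (intro nn_integral_cong) (simp add: indicator_def)
  also have "\<dots> = ?rhs"
    unfolding S_def
    by (rule nn_integral_PiM_lborel_two_sums_squares[where F = "\<lambda>u v. indicator S (u, v)", unfolded S_def])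
       (use borel_measurable_indicator[OF S_borel[unfolded S_def]] in \<open>auto simp: I_def J_def assms\<close>)
  finally show ?thesis .
qed

lemma nn_integral_cap_slice_le:
  fixes b :: nat and c s u :: real
  assumes "0 < b" "0 < s" "s \<le> 1" "0 \<le> c"
  shows "(\<integral>\<^sup>+v. ennreal (c * v ^ (b - 1)) * indicator {0..} v *
            indicator {(u, v). 0 < u + v \<and> u + v \<le> 1 \<and> s * (u + v) \<le> u} (u, v) \<partial>lborel)
         \<le> ennreal (c * min (1 - u) ((1 - s) / s * u) ^ b / b) * indicator {0..1} u"
proof -
  let ?m = "min (1 - u) ((1 - s) / s * u)"
  have "(\<integral>\<^sup>+v. ennreal (c * v ^ (b - 1)) * indicator {0..} v *
            indicator {(u, v). 0 < u + v \<and> u + v \<le> 1 \<and> s * (u + v) \<le> u} (u, v) \<partial>lborel)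
        \<le> (\<integral>\<^sup>+v. ennreal (c * v ^ (b - 1)) * indicator {0..?m} v * indicator {0..1} u \<partial>lborel)"
  proof (intro nn_integral_mono)
    fix v :: real
    have "v \<le> (1 - s) / s * u" if "s * (u + v) \<le> u"
      using that assms(2) by (simp add: field_simps)
    moreover have "0 < u" if "0 < u + v" "s * (u + v) \<le> u"
      using that mult_pos_pos[OF assms(2) that(1)] by linarith
    ultimately show "ennreal (c * v ^ (b - 1)) * indicator {0..} v *
            indicator {(u, v). 0 < u + v \<and> u + v \<le> 1 \<and> s * (u + v) \<le> u} (u, v)
        \<le> ennreal (c * v ^ (b - 1)) * indicator {0..?m} v * indicator {0..1} u"
      by (auto simp: indicator_def)
  qed
  also have "\<dots> = (\<integral>\<^sup>+v. ennreal (c * v ^ (b - 1)) * indicator {0..?m} v \<partial>lborel) * indicator {0..1} u"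
    by (rule nn_integral_multc) simp
  also have "\<dots> = ennreal (c * ?m ^ b / b) * indicator {0..1} u"
  proof (cases "u \<in> {0..1}")
    case True
    then have "0 \<le> ?m" using assms(2,3) by simp
    then show ?thesis
      using True nn_integral_power_atLeastAtMost[OF _ assms(1,4)] by simp
  qed simp
  finally show ?thesis .
qed

lemma power_mult_min_power_le:
  fixes \<kappa> u :: real
  assumes "0 < a" "0 \<le> \<kappa>" "0 \<le> u" "u \<le> 1"
  shows "u ^ (a - 1) * min (1 - u) (\<kappa> * u) ^ b \<le> \<kappa> ^ b * u ^ (a + b - 1)"
    and "u ^ (a - 1) * min (1 - u) (\<kappa> * u) ^ b \<le> u ^ (a - 1) * (1 - u) ^ b"
proof -
  have "0 \<le> min (1 - u) (\<kappa> * u)"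
    using assms(2-4) by simp
  then have "u ^ (a - 1) * min (1 - u) (\<kappa> * u) ^ b \<le> u ^ (a - 1) * (\<kappa> * u) ^ b"
    and "u ^ (a - 1) * min (1 - u) (\<kappa> * u) ^ b \<le> u ^ (a - 1) * (1 - u) ^ b"
    using assms(3) by (intro mult_left_mono power_mono; simp)+
  moreover have "u ^ (a - 1) * (\<kappa> * u) ^ b = \<kappa> ^ b * u ^ (a + b - 1)"
  proof -
    have "a + b - 1 = (a - 1) + b" using assms(1) by simp
    then show ?thesis by (simp only: power_add power_mult_distrib mult_ac)
  qed
  ultimately show "u ^ (a - 1) * min (1 - u) (\<kappa> * u) ^ b \<le> \<kappa> ^ b * u ^ (a + b - 1)"
    and "u ^ (a - 1) * min (1 - u) (\<kappa> * u) ^ b \<le> u ^ (a - 1) * (1 - u) ^ b"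
    by simp_all
qed

lemma nn_integral_power_min_le:
  fixes a b :: nat and c s B :: real
  assumes "0 < a" "0 < s" "s \<le> 1" "0 \<le> c"
    and B: "((\<lambda>u. u ^ (a - 1) * (1 - u) ^ b) has_integral B) {s..1}"
  shows "(\<integral>\<^sup>+u. ennreal (c * (u ^ (a - 1) * min (1 - u) ((1 - s) / s * u) ^ b)) * indicator {0..1} u \<partial>lborel)
         \<le> ennreal (c * (s ^ a * (1 - s) ^ b / (a + b) + B))"
proof -
  let ?\<kappa> = "(1 - s) / s"
  have \<kappa>: "0 \<le> ?\<kappa>" using assms(2,3) by simp
  have "(\<integral>\<^sup>+u. ennreal (c * (u ^ (a - 1) * min (1 - u) (?\<kappa> * u) ^ b)) * indicator {0..1} u \<partial>lborel)
      \<le> (\<integral>\<^sup>+u. ennreal (c * ?\<kappa> ^ b * u ^ (a + b - 1)) * indicator {0..s} u +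
                 ennreal (c * (u ^ (a - 1) * (1 - u) ^ b)) * indicator {s..1} u \<partial>lborel)"
  proof (intro nn_integral_mono)
    fix u :: real
    show "ennreal (c * (u ^ (a - 1) * min (1 - u) (?\<kappa> * u) ^ b)) * indicator {0..1} u
        \<le> ennreal (c * ?\<kappa> ^ b * u ^ (a + b - 1)) * indicator {0..s} u +
          ennreal (c * (u ^ (a - 1) * (1 - u) ^ b)) * indicator {s..1} u"
    proof (cases "0 \<le> u \<and> u \<le> 1")
      case True
      then show ?thesis
        using power_mult_min_power_le[OF assms(1) \<kappa>, of u b] assms(4)
        by (cases "u \<le> s")
           (simp_all add: ennreal_leI mult_left_mono mult.assoc add_increasing add_increasing2)
    qed simp
  qed
  also have "\<dots> = (\<integral>\<^sup>+u. ennreal (c * ?\<kappa> ^ b * u ^ (a + b - 1)) * indicator {0..s} u \<partial>lborel) +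
                  (\<integral>\<^sup>+u. ennreal (c * (u ^ (a - 1) * (1 - u) ^ b)) * indicator {s..1} u \<partial>lborel)"
    by (rule nn_integral_add) auto
  also have "(\<integral>\<^sup>+u. ennreal (c * ?\<kappa> ^ b * u ^ (a + b - 1)) * indicator {0..s} u \<partial>lborel) =
             ennreal (c * ?\<kappa> ^ b * s ^ (a + b) / (a + b))"
    using assms \<kappa> by (intro nn_integral_power_atLeastAtMost) auto
  also have "(\<integral>\<^sup>+u. ennreal (c * (u ^ (a - 1) * (1 - u) ^ b)) * indicator {s..1} u \<partial>lborel) = ennreal (c * B)"
    using assms(2-4) by (intro nn_integral_has_integral_lebesgue' has_integral_mult_right B) auto
  also have "ennreal (c * ?\<kappa> ^ b * s ^ (a + b) / (a + b)) + ennreal (c * B) =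
             ennreal (c * (s ^ a * (1 - s) ^ b / (a + b) + B))"
  proof -
    have "0 \<le> B" using assms(2,3) by (intro has_integral_nonneg[OF B]) auto
    have "?\<kappa> ^ b * s ^ (a + b) = s ^ a * (1 - s) ^ b"
      using assms(2) by (simp add: power_divide power_add field_simps)
    then have eq: "c * ?\<kappa> ^ b * s ^ (a + b) / (a + b) = c * (s ^ a * (1 - s) ^ b / (a + b))"
      by (simp add: mult.assoc)
    have "0 \<le> c * (s ^ a * (1 - s) ^ b / (a + b))"
      using assms(2-4) by (intro mult_nonneg_nonneg divide_nonneg_nonneg) auto
    then show ?thesis
      unfolding eq distrib_left using \<open>0 \<le> B\<close> assms(4) by (intro ennreal_plus[symmetric]) auto
  qed
  finally show ?thesis .
qed

lemma emeasure_cone_CAP_le: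
  fixes a b :: nat and h B :: real
  assumes "0 < a" "0 < b" "0 < h" "h \<le> 1"
    and "((\<lambda>u. u ^ (a - 1) * (1 - u) ^ b) has_integral B) {h\<^sup>2..1}"
  shows "emeasure (Pi\<^sub>M {..<2 * (a + b)} (\<lambda>_. lborel)) (cone (2 * (a + b)) (CAP (2 * (a + b)) (2 * a) h))
    \<le> ennreal (pi ^ (a + b) / (fact (a - 1) * fact b) * ((h\<^sup>2) ^ a * (1 - h\<^sup>2) ^ b / (a + b) + B))"
proof -
  let ?m = "\<lambda>u. min (1 - u) ((1 - h\<^sup>2) / h\<^sup>2 * u)"
  define ca cb where "ca = pi ^ a / fact (a - 1)" and "cb = pi ^ b / fact (b - 1)"
  have s: "0 < h\<^sup>2" "h\<^sup>2 \<le> 1" using assms(3,4) by (auto simp: power_le_one)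
  have "emeasure (Pi\<^sub>M {..<2 * (a + b)} (\<lambda>_. lborel)) (cone (2 * (a + b)) (CAP (2 * (a + b)) (2 * a) h)) =
      (\<integral>\<^sup>+u. ennreal (ca * u ^ (a - 1)) * indicator {0..} u *
         (\<integral>\<^sup>+v. ennreal (cb * v ^ (b - 1)) * indicator {0..} v *
            indicator {(u, v). 0 < u + v \<and> u + v \<le> 1 \<and> h\<^sup>2 * (u + v) \<le> u} (u, v) \<partial>lborel) \<partial>lborel)"
    unfolding ca_def cb_def by (rule emeasure_cone_CAP_eq_nn_integral[OF assms(1,2)])
  also have "\<dots> \<le> (\<integral>\<^sup>+u. ennreal (ca * u ^ (a - 1)) * indicator {0..} u *
                    (ennreal (cb * ?m u ^ b / b) * indicator {0..1} u) \<partial>lborel)"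
    using nn_integral_cap_slice_le[OF assms(2) s, of cb] by (intro nn_integral_mono mult_left_mono) (auto simp: cb_def)
  also have "\<dots> = (\<integral>\<^sup>+u. ennreal (ca * cb / b * (u ^ (a - 1) * ?m u ^ b)) * indicator {0..1} u \<partial>lborel)"
  proof (intro nn_integral_cong)
    fix u :: real
    show "ennreal (ca * u ^ (a - 1)) * indicator {0..} u * (ennreal (cb * ?m u ^ b / b) * indicator {0..1} u) =
        ennreal (ca * cb / b * (u ^ (a - 1) * ?m u ^ b)) * indicator {0..1} u"
    proof (cases "u \<in> {0..1}")
      case True
      then have "0 \<le> ?m u"
        using s mult_nonneg_nonneg[of "(1 - h\<^sup>2) / h\<^sup>2" u] by (simp add: min_def)
      then show ?thesis
        using True by (simp add: ca_def cb_def ennreal_mult'[symmetric] mult_ac)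
    qed simp
  qed
  also have "\<dots> \<le> ennreal (ca * cb / b * ((h\<^sup>2) ^ a * (1 - h\<^sup>2) ^ b / (a + b) + B))"
    by (rule nn_integral_power_min_le[OF assms(1) s _ assms(5)]) (simp add: ca_def cb_def)
  also have "ca * cb / b = pi ^ (a + b) / (fact (a - 1) * fact b)"
    using assms(2) by (simp add: ca_def cb_def fact_reduce[of b] power_add)
  finally show ?thesis .
qed

section \<open>Binomial tails\<close>

definition binomial_cdf :: "nat \<Rightarrow> nat \<Rightarrow> real \<Rightarrow> real" where
  "binomial_cdf n j p = (\<Sum>k\<le>j. real (n choose k) * (p ^ k * (1 - p) ^ (n - k)))"

lemma prob_binomial_pmf_atMost:
  assumes "0 \<le> p" "p \<le> 1"
  shows "measure_pmf.prob (binomial_pmf n p) {..j} = binomial_cdf n j p"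
  using assms by (simp add: measure_measure_pmf_finite binomial_cdf_def mult.assoc)

lemma binomial_cdf_1:
  assumes "j < n"
  shows "binomial_cdf n j 1 = 0"
  using assms by (auto intro!: sum.neutral simp: binomial_cdf_def)

lemma binomial_cdf_Suc:
  assumes "j \<le> n"
  shows "binomial_cdf n j p = binomial_cdf (Suc n) j p + real (n choose j) * (p ^ Suc j * (1 - p) ^ (n - j))"
  using assms
proof (induction j)
  case (Suc j)
  have e: "(1 - p) ^ (n - j) = (1 - p) * (1 - p) ^ (n - Suc j)" "Suc n - Suc j = n - j"
    using Suc.prems by (auto simp: power_Suc[symmetric] Suc_diff_Suc)
  have "binomial_cdf (Suc n) (Suc j) p + real (n choose Suc j) * (p ^ Suc (Suc j) * (1 - p) ^ (n - Suc j))
      = binomial_cdf n j p - real (n choose j) * (p ^ Suc j * (1 - p) ^ (n - j)) +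
        (real (n choose j) + real (n choose Suc j)) * (p ^ Suc j * (1 - p) ^ (n - j)) +
        real (n choose Suc j) * (p ^ Suc (Suc j) * (1 - p) ^ (n - Suc j))"
    using Suc by (simp add: binomial_cdf_def e(2))
  also have "\<dots> = binomial_cdf n j p + real (n choose Suc j) * (p ^ Suc j * (1 - p) ^ (n - Suc j)) * (p + (1 - p))"
    by (simp add: e(1) algebra_simps)
  also have "\<dots> = binomial_cdf n (Suc j) p"
    by (simp add: binomial_cdf_def)
  finally show ?case ..
qed (simp add: binomial_cdf_def algebra_simps)

lemma binomial_cdf_has_real_derivative:
  assumes "j < n"
  shows "((\<lambda>p. binomial_cdf n j p) has_real_derivative
           - (real n * real ((n - 1) choose j) * (p ^ j * (1 - p) ^ (n - 1 - j)))) (at p)"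
  using assms
proof (induction j)
  case 0
  show ?case
    unfolding binomial_cdf_def by (auto intro!: derivative_eq_intros simp: power_diff)
next
  case (Suc j)
  \<comment> \<open>The derivatives of consecutive summands telescope.\<close>
  have summand: "((\<lambda>p. real (n choose Suc j) * (p ^ Suc j * (1 - p) ^ (n - Suc j))) has_real_derivative
      real (Suc j) * real (n choose Suc j) * (p ^ j * (1 - p) ^ (n - Suc j)) -
      real (n - Suc j) * real (n choose Suc j) * (p ^ Suc j * (1 - p) ^ (n - 1 - Suc j))) (at p)"
  proof -
    have "((\<lambda>p. p ^ Suc j * (1 - p) ^ (n - Suc j)) has_real_derivative
        real (Suc j) * p ^ j * (1 - p) ^ (n - Suc j) - real (n - Suc j) * p ^ Suc j * (1 - p) ^ (n - Suc j - 1)) (at p)"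
      by (rule derivative_eq_intros refl | simp)+
    from DERIV_cmult[OF this, of "real (n choose Suc j)"] show ?thesis
      by (simp add: algebra_simps diff_diff_left)
  qed
  have "real (Suc j) * real (n choose Suc j) = real n * real ((n - 1) choose j)"
    using binomial_absorption[of j n] by (metis of_nat_mult)
  moreover have "real (n - Suc j) * real (n choose Suc j) = real n * real ((n - 1) choose Suc j)"
    using binomial_absorb_comp[of n "Suc j"] by (metis of_nat_mult)
  moreover have "n - 1 - j = n - Suc j" by simp
  ultimately have "((\<lambda>p. binomial_cdf n j p + real (n choose Suc j) * (p ^ Suc j * (1 - p) ^ (n - Suc j)))
      has_real_derivative - (real n * real ((n - 1) choose Suc j) * (p ^ Suc j * (1 - p) ^ (n - 1 - Suc j)))) (at p)"
    using DERIV_add[OF Suc.IH summand] Suc.prems by simp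
  then show ?case
    by (simp add: binomial_cdf_def)
qed

lemma has_integral_incomplete_beta:
  fixes a b :: nat and s :: real
  assumes "0 < a" "0 < b" "s \<le> 1"
  shows "((\<lambda>u. u ^ (a - 1) * (1 - u) ^ b) has_integral
          binomial_cdf (a + b) (a - 1) s / (real (a + b) * real ((a + b - 1) choose (a - 1)))) {s..1}"
proof -
  define c where "c = real (a + b) * real ((a + b - 1) choose (a - 1))"
  have "0 < c" using assms(1) by (simp add: c_def)
  have "((\<lambda>u. u ^ (a - 1) * (1 - u) ^ b) has_integral
      (- binomial_cdf (a + b) (a - 1) 1 / c) - (- binomial_cdf (a + b) (a - 1) s / c)) {s..1}"
  proof (rule fundamental_theorem_of_calculus)
    fix u :: real
    have "a + b - 1 - (a - 1) = b" using assms(1) by simp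
    then have "((\<lambda>u. binomial_cdf (a + b) (a - 1) u) has_real_derivative - (c * (u ^ (a - 1) * (1 - u) ^ b))) (at u)"
      using binomial_cdf_has_real_derivative[of "a - 1" "a + b" u] assms(1,2) by (simp add: c_def mult.assoc)
    then have "((\<lambda>u. - binomial_cdf (a + b) (a - 1) u / c) has_real_derivative u ^ (a - 1) * (1 - u) ^ b) (at u)"
      using \<open>0 < c\<close> by (auto intro!: derivative_eq_intros)
    then show "((\<lambda>u. - binomial_cdf (a + b) (a - 1) u / c) has_vector_derivative u ^ (a - 1) * (1 - u) ^ b)
        (at u within {s..1})"
      by (simp add: has_real_derivative_iff_has_vector_derivative has_vector_derivative_at_within)
  qed (use assms(3) in simp)
  then show ?thesis
    using binomial_cdf_1[of "a - 1" "a + b"] assms(2) by (simp add: c_def)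
qed

lemma sphere_area_div_total_eq:
  assumes "0 < d"
  shows "sphere_area (2 * d) A / (2 * pi ^ d / Gamma (real d))
           = fact d / pi ^ d * measure (Pi\<^sub>M {..<2 * d} (\<lambda>_. lborel)) (cone (2 * d) A)"
proof -
  have "Gamma (real d) = fact (d - 1)"
    using Gamma_fact[of "d - 1"] assms by (simp add: add.commute)
  moreover have "fact d = real d * fact (d - 1)"
    using assms by (simp add: fact_reduce)
  ultimately show ?thesis
    by (simp add: sphere_area_def)
qed

lemma CAP_area_ratio_le_binomial_cdf:
  fixes a b :: nat and h :: real
  assumes "0 < a" "0 < b" "0 < h" "h \<le> 1"
  shows "sphere_area (2 * (a + b)) (CAP (2 * (a + b)) (2 * a) h) / (2 * pi ^ (a + b) / Gamma (real (a + b)))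
    \<le> binomial_cdf (a + b - 1) (a - 1) (h\<^sup>2)"
proof -
  define d s where "d = a + b" and "s = h\<^sup>2"
  define C where "C = real ((d - 1) choose (a - 1))"
  define B where "B = binomial_cdf d (a - 1) s / (real d * C)"
  define X where "X = pi ^ d / (fact (a - 1) * fact b) * (s ^ a * (1 - s) ^ b / d + B)"
  have s: "0 < s" "s \<le> 1" using assms(3,4) by (auto simp: s_def power_le_one)
  have "0 < d" "0 < C" using assms(1) by (simp_all add: d_def C_def)
  have B: "((\<lambda>u. u ^ (a - 1) * (1 - u) ^ b) has_integral B) {s..1}"
    using has_integral_incomplete_beta[OF assms(1,2) s(2)] by (simp add: B_def C_def d_def)
  have "0 \<le> X"
    using s has_integral_nonneg[OF B] by (simp add: X_def)
  have "sphere_area (2 * d) (CAP (2 * d) (2 * a) h) / (2 * pi ^ d / Gamma (real d))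
      = fact d / pi ^ d * measure (Pi\<^sub>M {..<2 * d} (\<lambda>_. lborel)) (cone (2 * d) (CAP (2 * d) (2 * a) h))"
    by (rule sphere_area_div_total_eq[OF \<open>0 < d\<close>])
  also have "\<dots> \<le> fact d / pi ^ d * X"
    unfolding measure_def using emeasure_cone_CAP_le[OF assms B[unfolded s_def]] \<open>0 \<le> X\<close>
    by (intro mult_left_mono enn2real_leI) (simp_all add: X_def d_def s_def)
  also have "\<dots> = C * (s ^ a * (1 - s) ^ b) + binomial_cdf d (a - 1) s"
  proof -
    have "d - 1 - (a - 1) = b" using assms(1) by (simp add: d_def)
    then have "fact (a - 1) * fact b * ((d - 1) choose (a - 1)) = (fact (d - 1) :: nat)"
      using binomial_fact_lemma[of "a - 1" "d - 1"] by (simp add: d_def)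
    then have "fact d = real d * (fact (a - 1) * fact b * C)"
      using \<open>0 < d\<close> unfolding C_def by (metis fact_reduce of_nat_fact of_nat_mult)
    then show ?thesis
      using \<open>0 < C\<close> \<open>0 < d\<close> by (simp add: X_def B_def field_simps)
  qed
  also have "\<dots> = binomial_cdf (d - 1) (a - 1) s"
    using binomial_cdf_Suc[of "a - 1" "d - 1" s] assms(1,2) by (simp add: C_def d_def Suc_diff_Suc)
  finally show ?thesis by (simp add: d_def s_def)
qed

lemma binomial_cdf_le_exp:
  fixes a d :: nat and s :: real
  assumes "0 < a" "a < d" "real a / real d \<le> s" "s \<le> 1"
  shows "binomial_cdf (d - 1) (a - 1) s \<le> exp (- 2 * (real d + 1) * (s - real a / real d)\<^sup>2)"
proof -
  define D \<delta> t where "D = real d - 1" and "\<delta> = s - real a / real d" and "t = 1 - real a / real d"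
  have "0 < D" "0 \<le> \<delta>" "\<delta> \<le> t" "0 \<le> s"
    using assms by (auto simp: D_def \<delta>_def t_def intro: order_trans[OF _ assms(3)])
  have "real (d - 1) * s - real (a - 1) = D * \<delta> + t"
    using assms(1,2) by (simp add: D_def \<delta>_def t_def of_nat_diff field_simps)
  then have "{..a - 1} = {k. real k \<le> real (d - 1) * s - (D * \<delta> + t)}"
    by auto
  then have "binomial_cdf (d - 1) (a - 1) s = measure_pmf.prob (binomial_pmf (d - 1) s)
      {k. real k \<le> real (d - 1) * s - (D * \<delta> + t)}"
    using \<open>0 \<le> s\<close> assms(4) by (simp flip: prob_binomial_pmf_atMost)
  \<comment> \<open>Hoeffding at distance D \<delta> + t below the mean; the extra t turns 1 / D into D + 2.\<close>
  also have "\<dots> \<le> exp (- 2 * (D * \<delta> + t)\<^sup>2 / real (d - 1))"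
    using \<open>0 \<le> s\<close> assms \<open>0 < D\<close> \<open>0 \<le> \<delta>\<close> \<open>\<delta> \<le> t\<close>
    by (intro binomial_distribution.prob_le) (unfold_locales, auto)
  also have "\<dots> \<le> exp (- 2 * (D + 2) * \<delta>\<^sup>2)"
  proof -
    have "(D * \<delta> + t)\<^sup>2 - (D + 2) * \<delta>\<^sup>2 * D = 2 * D * \<delta> * (t - \<delta>) + t\<^sup>2"
      by (simp add: power2_eq_square algebra_simps)
    also have "\<dots> \<ge> 0"
      using \<open>0 < D\<close> \<open>0 \<le> \<delta>\<close> \<open>\<delta> \<le> t\<close> by simp
    finally have "(D + 2) * \<delta>\<^sup>2 \<le> (D * \<delta> + t)\<^sup>2 / D"
      using \<open>0 < D\<close> by (simp add: field_simps)
    moreover have "real (d - 1) = D"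
      using assms(2) by (simp add: D_def of_nat_diff)
    ultimately show ?thesis
      unfolding exp_le_cancel_iff times_divide_eq_right[symmetric] mult.assoc
      by (intro mult_left_mono_neg) simp_all
  qed
  also have "D + 2 = real d + 1"
    by (simp add: D_def)
  finally show ?thesis
    unfolding \<delta>_def .
qed

lemma two_powr_neg_eq_divide:
  assumes "k \<le> n"
  shows "2 powr (- real k) = real (2 ^ (n - k) :: nat) / real (2 ^ n :: nat)"
proof -
  have "(2::real) ^ n = 2 ^ (n - k) * 2 ^ k"
    using assms by (simp flip: power_add)
  then show ?thesis
    by (simp add: powr_minus powr_realpow divide_simps)
qed

theorem lemma3:
  fixes n m :: nat and h :: real
  assumes "0 < n" and "0 < m" and "2 * m < n"
    and "0 < h" and "h \<le> 1"
    and "h\<^sup>2 - 2 powr (- 2 * real m) > 0"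
  shows "sphere_area (2 * 2 ^ n) (CAP (2 * 2 ^ n) (2 * 2 ^ (n - 2 * m)) h)
           / (2 * pi ^ (2 ^ n) / Gamma (real (2 ^ n)))
         \<le> exp (- 2 * (real (2 ^ n) + 1) * (h\<^sup>2 - 2 powr (- 2 * real m))\<^sup>2)"
proof -
  define d a :: nat where "d = 2 ^ n" and "a = 2 ^ (n - 2 * m)"
  have "2 * a \<le> d"
  proof -
    have "2 * a = 2 ^ Suc (n - 2 * m)" by (simp add: a_def)
    also have "\<dots> \<le> 2 ^ n" using assms(2,3) by (intro power_increasing) auto
    finally show ?thesis by (simp add: d_def)
  qed
  moreover have "0 < a" by (simp add: a_def)
  ultimately have "a < d" "a + (d - a) = d" "0 < d - a"
    by auto
  have a_div_d: "2 powr (- 2 * real m) = real a / real d"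
    using two_powr_neg_eq_divide[of "2 * m" n] assms(3) by (simp add: a_def d_def)
  have "sphere_area (2 * d) (CAP (2 * d) (2 * a) h) / (2 * pi ^ d / Gamma (real d))
      \<le> binomial_cdf (d - 1) (a - 1) (h\<^sup>2)"
    using CAP_area_ratio_le_binomial_cdf[OF \<open>0 < a\<close> \<open>0 < d - a\<close> assms(4,5)]
    unfolding \<open>a + (d - a) = d\<close> .
  also have "\<dots> \<le> exp (- 2 * (real d + 1) * (h\<^sup>2 - real a / real d)\<^sup>2)"
    using assms(4-6) a_div_d by (intro binomial_cdf_le_exp \<open>0 < a\<close> \<open>a < d\<close> power_le_one) auto
  finally show ?thesis
    unfolding a_div_d by (simp only: d_def a_def)
qed

end
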